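(* Let $\mathcal G=((V,E),(V_1,V_2,V_\Diamond),\delta,w)$ be a stochastic game, $\varphi$ a bounded prefix-independent objective, and consider the classes of the expected value vector $\mathsf r^*=(\mathbb{E}_v(\varphi))_{v\in V}$. Let $N$ be the maximum denominator (in lowest terms) of the probabilities $\delta(v)(v')$ occurring in $\mathcal G$, and let $B_0$ be a positive integer such that the value of every $\mathsf r^*$-class without boundary vertices can be written as $p/q$ with integers $p,q$, $0<q\le B_0$. Then the value of every $\mathsf r^*$-class can be written as $p/q$ with integers $p,q$ and $0<q\le 2^{|V|}\cdot N^{|V|^3}\cdot B_0^{|V|}$.
   Context: A stochastic game is $\mathcal{G}=((V,E),(V_1,V_2,V_\Diamond),\delta,w)$ where $(V,E)$ is a finite directed graph in which every vertex $v$ has a nonempty set $E(v)=\{v' : (v,v')\in E\}$ of out-neighbours; $(V_1,V_2,V_\Diamond)$ partitions $V$ into vertices of Player 1, of Player 2, and probabilistic vertices; $\delta$ assigns to each $v\in V_\Diamond$ a probability distribution on $E(v)$ with rational values, positive on every out-neighbour; $w:E\to\mathbb{Q}$ is a payoff function. Plays are infinite paths; deterministic strategies of Player $i$ map finite prefixes ending in $V_i$ to an out-neighbour of the last vertex; a strategy pair and initial vertex induce a probability measure on plays. An objective $\varphi$ is a Borel-measurable real function on plays; bounded if $|\varphi|\le W_\varphi$ for some integer $W_\varphi$; prefix-independent if plays with a common suffix get equal value. Player 1 maximises, Player 2 minimises the expectation; $\mathbb{E}_v(\varphi)=\sup_{\sigma_1}\inf_{\sigma_2}\mathbb{E}^{\sigma_1,\sigma_2}_v[\varphi]=\inf_{\sigma_2}\sup_{\sigma_1}\mathbb{E}^{\sigma_1,\sigma_2}_v[\varphi]$.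 For a real vector $\mathsf r$ indexed by $V$, its classes are the maximal nonempty sets of vertices on which $\mathsf r$ is constant (the value of the class is this constant); a vertex $v$ of a class $C$ is a boundary vertex if $v\in V_\Diamond$ and $E(v)\not\subseteq C$. *)

theory Defs
  imports "HOL-Probability.Probability"
begin

text \<open>Stochastic games. Vertices are the elements of a finite type 'v (so V = UNIV, |V| = CARD('v)).
  Finite prefixes of plays are nonempty lists (oldest vertex first); plays are streams.\<close>

definition succs :: "('v \<times> 'v) set \<Rightarrow> 'v \<Rightarrow> 'v set" where
  "succs E v = {u. (v, u) \<in> E}"

definition stochastic_game ::
  "('v::finite \<times> 'v) set \<Rightarrow> 'v set \<Rightarrow> 'v set \<Rightarrow> 'v set \<Rightarrow> ('v \<Rightarrow> 'v \<Rightarrow> rat) \<Rightarrow> bool" where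
  "stochastic_game E V1 V2 Vp \<delta> \<longleftrightarrow>
     (\<forall>v. succs E v \<noteq> {}) \<and>
     V1 \<union> V2 \<union> Vp = UNIV \<and> V1 \<inter> V2 = {} \<and> V1 \<inter> Vp = {} \<and> V2 \<inter> Vp = {} \<and>
     (\<forall>v\<in>Vp. (\<forall>u\<in>succs E v. \<delta> v u > 0) \<and> (\<Sum>u\<in>succs E v. \<delta> v u) = 1)"

definition strategies :: "('v \<times> 'v) set \<Rightarrow> 'v set \<Rightarrow> ('v list \<Rightarrow> 'v) set" where
  "strategies E Vi = {\<sigma>. \<forall>h. h \<noteq> [] \<and> last h \<in> Vi \<longrightarrow> \<sigma> h \<in> succs E (last h)}"

definition is_play :: "('v \<times> 'v) set \<Rightarrow> 'v stream \<Rightarrow> bool" where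
  "is_play E \<omega> \<longleftrightarrow> (\<forall>i. (\<omega> !! i, \<omega> !! Suc i) \<in> E)"

definition step_prob ::
  "('v \<times> 'v) set \<Rightarrow> 'v set \<Rightarrow> 'v set \<Rightarrow> ('v \<Rightarrow> 'v \<Rightarrow> rat) \<Rightarrow>
   ('v list \<Rightarrow> 'v) \<Rightarrow> ('v list \<Rightarrow> 'v) \<Rightarrow> 'v list \<Rightarrow> 'v \<Rightarrow> real" where
  "step_prob E V1 V2 \<delta> \<sigma>1 \<sigma>2 h u =
     (if last h \<in> V1 then (if \<sigma>1 h = u then 1 else 0)
      else if last h \<in> V2 then (if \<sigma>2 h = u then 1 else 0)
      else if u \<in> succs E (last h) then real_of_rat (\<delta> (last h) u) else 0)"

definition prefix_prob ::
  "('v \<times> 'v) set \<Rightarrow> 'v set \<Rightarrow> 'v set \<Rightarrow> ('v \<Rightarrow> 'v \<Rightarrow> rat) \<Rightarrow>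
   ('v list \<Rightarrow> 'v) \<Rightarrow> ('v list \<Rightarrow> 'v) \<Rightarrow> 'v \<Rightarrow> 'v list \<Rightarrow> real" where
  "prefix_prob E V1 V2 \<delta> \<sigma>1 \<sigma>2 v h =
     (if hd h = v then (\<Prod>i<length h - 1. step_prob E V1 V2 \<delta> \<sigma>1 \<sigma>2 (take (Suc i) h) (h ! Suc i))
      else 0)"

definition play_measure ::
  "('v::countable \<times> 'v) set \<Rightarrow> 'v set \<Rightarrow> 'v set \<Rightarrow> ('v \<Rightarrow> 'v \<Rightarrow> rat) \<Rightarrow>
   ('v list \<Rightarrow> 'v) \<Rightarrow> ('v list \<Rightarrow> 'v) \<Rightarrow> 'v \<Rightarrow> 'v stream measure" where
  "play_measure E V1 V2 \<delta> \<sigma>1 \<sigma>2 v =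
     (SOME M. sets M = sets (stream_space (count_space UNIV)) \<and> prob_space M \<and>
        (\<forall>h. h \<noteq> [] \<longrightarrow>
           measure M {\<omega> \<in> space M. stake (length h) \<omega> = h} = prefix_prob E V1 V2 \<delta> \<sigma>1 \<sigma>2 v h))"

definition expected ::
  "('v::countable \<times> 'v) set \<Rightarrow> 'v set \<Rightarrow> 'v set \<Rightarrow> ('v \<Rightarrow> 'v \<Rightarrow> rat) \<Rightarrow>
   ('v list \<Rightarrow> 'v) \<Rightarrow> ('v list \<Rightarrow> 'v) \<Rightarrow> 'v \<Rightarrow> ('v stream \<Rightarrow> real) \<Rightarrow> real" where
  "expected E V1 V2 \<delta> \<sigma>1 \<sigma>2 v \<phi> = integral\<^sup>L (play_measure E V1 V2 \<delta> \<sigma>1 \<sigma>2 v) \<phi>"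

definition game_value ::
  "('v::countable \<times> 'v) set \<Rightarrow> 'v set \<Rightarrow> 'v set \<Rightarrow> ('v \<Rightarrow> 'v \<Rightarrow> rat) \<Rightarrow>
   ('v stream \<Rightarrow> real) \<Rightarrow> 'v \<Rightarrow> real" where
  "game_value E V1 V2 \<delta> \<phi> v =
     (SUP \<sigma>1\<in>strategies E V1. INF \<sigma>2\<in>strategies E V2. expected E V1 V2 \<delta> \<sigma>1 \<sigma>2 v \<phi>)"

definition bounded_objective :: "('v \<times> 'v) set \<Rightarrow> ('v stream \<Rightarrow> real) \<Rightarrow> bool" where
  "bounded_objective E \<phi> \<longleftrightarrow> (\<exists>W::int. \<forall>\<omega>. is_play E \<omega> \<longrightarrow> \<bar>\<phi> \<omega>\<bar> \<le> W)"

definition prefix_independent :: "('v \<times> 'v) set \<Rightarrow> ('v stream \<Rightarrow> real) \<Rightarrow> bool" where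
  "prefix_independent E \<phi> \<longleftrightarrow>
     (\<forall>\<omega> \<omega>' i j. is_play E \<omega> \<and> is_play E \<omega>' \<and> sdrop i \<omega> = sdrop j \<omega>' \<longrightarrow> \<phi> \<omega> = \<phi> \<omega>')"

definition classes :: "('v \<Rightarrow> real) \<Rightarrow> 'v set set" where
  "classes r = {C. C \<noteq> {} \<and> (\<exists>c. C = {u. r u = c})}"

definition class_value :: "('v \<Rightarrow> real) \<Rightarrow> 'v set \<Rightarrow> real" where
  "class_value r C = r (SOME u. u \<in> C)"

definition boundary_vertex :: "('v \<times> 'v) set \<Rightarrow> 'v set \<Rightarrow> 'v set \<Rightarrow> 'v \<Rightarrow> bool" where
  "boundary_vertex E Vp C v \<longleftrightarrow> v \<in> C \<and> v \<in> Vp \<and> \<not> succs E v \<subseteq> C"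

text \<open>Maximum denominator (in lowest terms) of the probabilities occurring in the game
  (1 if there are none).\<close>
definition max_denom :: "('v::finite \<times> 'v) set \<Rightarrow> 'v set \<Rightarrow> ('v \<Rightarrow> 'v \<Rightarrow> rat) \<Rightarrow> int" where
  "max_denom E Vp \<delta> = Max (insert 1 {snd (quotient_of (\<delta> v u)) | v u. v \<in> Vp \<and> u \<in> succs E v})"

end

theory Submission
  imports Defs
begin

text \<open>
  At a random vertex v the value is the \<delta>(v)-weighted average of the values of the successors:
  after the first move both players may answer independently in every successor (strategies
  can be glued), and prefix independence lets the objective forget v.  Hence the value vector r
  solves a linear system A r = b.  A vertex whose class has no boundary vertex is pinned to its
  value, whose denominator is at most B0; in every other class one boundary vertex carries its
  averaging equation multiplied by the product of the denominators of \<delta>(v), and the remaining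
  vertices of the class are equated with it.  A maximum principle shows that A is nonsingular.
  The rows of the integer matrix A have absolute sum at most 2 N^|V|, so
  |det A| \<le> 2^|V| N^(|V|^2), and Cramer's rule applied to Q r, where Q \<le> B0^|V| clears the
  denominators of b, bounds the denominator of every entry of r by Q |det A|.
\<close>

section \<open>Weighted sums, infima and integer determinants\<close>

lemma sum_of_bool_eq_mult: "(\<Sum>j\<in>UNIV. of_bool (j = x) * f j) = (f x :: real)"
  for f :: "'a::finite \<Rightarrow> real"
  by (simp add: of_bool_def if_distrib[where f="\<lambda>a. a * _"] cong: if_cong)

lemma sum_if_mem_mult: "(\<Sum>j\<in>UNIV. (if j \<in> T then c j else 0) * f j) = (\<Sum>j\<in>T. c j * f j :: real)"
  for f :: "'a::finite \<Rightarrow> real"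
  by (simp add: if_distrib[where f="\<lambda>a. a * _"] sum.If_cases)

lemma weighted_average_eq_bound_imp_eq:
  fixes w f :: "'a \<Rightarrow> real"
  assumes "finite S" and w_pos: "\<And>j. j \<in> S \<Longrightarrow> w j > 0" and w_sum: "sum w S = 1"
    and f_le: "\<And>j. j \<in> S \<Longrightarrow> f j \<le> m" and avg: "(\<Sum>j\<in>S. w j * f j) = m"
    and j: "j \<in> S"
  shows "f j = m"
proof -
  have "(\<Sum>j\<in>S. w j * (m - f j)) = m * sum w S - (\<Sum>j\<in>S. w j * f j)"
    by (simp add: algebra_simps sum_subtractf sum_distrib_left)
  then have "(\<Sum>j\<in>S. w j * (m - f j)) = 0"
    using w_sum avg by simp
  moreover have "\<forall>j\<in>S. 0 \<le> w j * (m - f j)"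
    using w_pos f_le by (simp add: less_imp_le)
  ultimately have "\<forall>j\<in>S. w j * (m - f j) = 0"
    by (simp add: sum_nonneg_eq_0_iff[OF \<open>finite S\<close>])
  then show ?thesis
    using j w_pos[OF j] by fastforce
qed

lemma obtain_lex_maximiser:
  fixes f g :: "'a::finite \<Rightarrow> real"
  obtains x0 where "\<And>z. f z \<le> f x0" and "\<And>z. f z = f x0 \<Longrightarrow> g z \<le> g x0"
proof -
  define T where "T = {z. f z = Max (range f)}"
  have "Max (range f) \<in> range f"
    by (rule Max_in) auto
  then obtain x where "Max (range f) = f x"
    by blast
  then have "T \<noteq> {}"
    by (auto simp: T_def)
  then have "Max (g ` T) \<in> g ` T"
    by (intro Max_in) auto
  then obtain x0 where "x0 \<in> T" and "g x0 = Max (g ` T)"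
    by (metis imageE)
  then show ?thesis
    using that[of x0] by (simp add: T_def)
qed

lemma cINF_weighted_sum_le_glued:
  fixes h :: "'a \<Rightarrow> 'u \<Rightarrow> real" and f :: "'u \<Rightarrow> 'a \<Rightarrow> real"
  assumes "finite S" and d: "\<And>u. u \<in> S \<Longrightarrow> d u \<ge> 0" and "T \<noteq> {}"
    and bdd: "\<And>u. u \<in> S \<Longrightarrow> bdd_below (f u ` T)" and bdd_h: "bdd_below ((\<lambda>\<sigma>. \<Sum>u\<in>S. d u * h \<sigma> u) ` T)"
    and glue: "\<And>\<tau>s. (\<And>u. u \<in> S \<Longrightarrow> \<tau>s u \<in> T) \<Longrightarrow> \<exists>\<sigma>\<in>T. \<forall>u\<in>S. h \<sigma> u = f u (\<tau>s u)"
  shows "(INF \<sigma>\<in>T. \<Sum>u\<in>S. d u * h \<sigma> u) \<le> (\<Sum>u\<in>S. d u * (INF \<tau>\<in>T. f u \<tau>))"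
proof (rule field_le_epsilon)
  fix e :: real
  assume "0 < e"
  define e' where "e' = e / (sum d S + 1)"
  have "sum d S \<ge> 0"
    using d by (simp add: sum_nonneg)
  then have "e' > 0" and "sum d S * e' \<le> e"
    using \<open>0 < e\<close> by (simp_all add: e'_def field_simps)
  have "\<exists>\<tau>\<in>T. f u \<tau> < (INF \<tau>\<in>T. f u \<tau>) + e'" if "u \<in> S" for u
    using cINF_less_iff[OF \<open>T \<noteq> {}\<close> bdd[OF that], of "(INF \<tau>\<in>T. f u \<tau>) + e'"] \<open>e' > 0\<close> by simp
  then obtain \<tau>s where \<tau>s: "\<And>u. u \<in> S \<Longrightarrow> \<tau>s u \<in> T \<and> f u (\<tau>s u) < (INF \<tau>\<in>T. f u \<tau>) + e'"
    by metis
  obtain \<sigma> where "\<sigma> \<in> T" and \<sigma>: "\<forall>u\<in>S. h \<sigma> u = f u (\<tau>s u)"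
    using glue[of \<tau>s] \<tau>s by blast
  have "(INF \<sigma>\<in>T. \<Sum>u\<in>S. d u * h \<sigma> u) \<le> (\<Sum>u\<in>S. d u * h \<sigma> u)"
    by (rule cINF_lower[OF bdd_h \<open>\<sigma> \<in> T\<close>])
  also have "\<dots> \<le> (\<Sum>u\<in>S. d u * ((INF \<tau>\<in>T. f u \<tau>) + e'))"
    using \<sigma> \<tau>s d by (intro sum_mono mult_left_mono) (auto intro: less_imp_le)
  also have "\<dots> = (\<Sum>u\<in>S. d u * (INF \<tau>\<in>T. f u \<tau>)) + sum d S * e'"
    by (simp add: distrib_left sum.distrib sum_distrib_right)
  finally show "(INF \<sigma>\<in>T. \<Sum>u\<in>S. d u * h \<sigma> u) \<le> (\<Sum>u\<in>S. d u * (INF \<tau>\<in>T. f u \<tau>)) + e"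
    using \<open>sum d S * e' \<le> e\<close> by simp
qed

lemma cINF_weighted_sum_glued:
  fixes h :: "'a \<Rightarrow> 'u \<Rightarrow> real" and f :: "'u \<Rightarrow> 'a \<Rightarrow> real"
  assumes "finite S" and d: "\<And>u. u \<in> S \<Longrightarrow> d u \<ge> 0" and "T \<noteq> {}"
    and bounded: "\<And>u \<tau>. u \<in> S \<Longrightarrow> \<tau> \<in> T \<Longrightarrow> \<bar>f u \<tau>\<bar> \<le> B"
    and restrict: "\<And>\<sigma> u. \<sigma> \<in> T \<Longrightarrow> u \<in> S \<Longrightarrow> \<exists>\<tau>\<in>T. h \<sigma> u = f u \<tau>"
    and glue: "\<And>\<tau>s. (\<And>u. u \<in> S \<Longrightarrow> \<tau>s u \<in> T) \<Longrightarrow> \<exists>\<sigma>\<in>T. \<forall>u\<in>S. h \<sigma> u = f u (\<tau>s u)"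
  shows "(INF \<sigma>\<in>T. \<Sum>u\<in>S. d u * h \<sigma> u) = (\<Sum>u\<in>S. d u * (INF \<tau>\<in>T. f u \<tau>))"
proof -
  have bdd: "bdd_below (f u ` T)" if "u \<in> S" for u
    using bounded[OF that] by (intro bdd_belowI[of _ "-B"]) force
  have ge: "(\<Sum>u\<in>S. d u * (INF \<tau>\<in>T. f u \<tau>)) \<le> (\<Sum>u\<in>S. d u * h \<sigma> u)" if \<sigma>: "\<sigma> \<in> T" for \<sigma>
  proof (rule sum_mono)
    fix u
    assume "u \<in> S"
    then obtain \<tau> where "\<tau> \<in> T" "h \<sigma> u = f u \<tau>"
      using restrict[OF \<sigma>] by blast
    then show "d u * (INF \<tau>\<in>T. f u \<tau>) \<le> d u * h \<sigma> u"
      using cINF_lower[OF bdd[OF \<open>u \<in> S\<close>]] d[OF \<open>u \<in> S\<close>] by (simp add: mult_left_mono)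
  qed
  then have "bdd_below ((\<lambda>\<sigma>. \<Sum>u\<in>S. d u * h \<sigma> u) ` T)"
    by (intro bdd_belowI) auto
  then show ?thesis
    using ge by (intro antisym cINF_weighted_sum_le_glued cINF_greatest assms bdd) auto
qed

lemma real_SUP_eq_uminus_INF: "(SUP x\<in>T. g x) = - (INF x\<in>T. - g x :: real)"
proof -
  have "(INF x\<in>T. - g x) = - Sup (uminus ` (\<lambda>x. - g x) ` T)" by (simp add: Inf_real_def)
  also have "uminus ` (\<lambda>x. - g x) ` T = g ` T" by (simp add: image_image)
  finally show ?thesis by simp
qed

lemma cSUP_weighted_sum_glued:
  fixes h :: "'a \<Rightarrow> 'u \<Rightarrow> real" and f :: "'u \<Rightarrow> 'a \<Rightarrow> real"
  assumes S: "finite S" and d: "\<And>u. u \<in> S \<Longrightarrow> d u \<ge> 0" and T: "T \<noteq> {}"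
    and bounded: "\<And>u \<tau>. u \<in> S \<Longrightarrow> \<tau> \<in> T \<Longrightarrow> \<bar>f u \<tau>\<bar> \<le> B"
    and restrict: "\<And>\<sigma> u. \<sigma> \<in> T \<Longrightarrow> u \<in> S \<Longrightarrow> \<exists>\<tau>\<in>T. h \<sigma> u = f u \<tau>"
    and glue: "\<And>\<tau>s. (\<And>u. u \<in> S \<Longrightarrow> \<tau>s u \<in> T) \<Longrightarrow> \<exists>\<sigma>\<in>T. \<forall>u\<in>S. h \<sigma> u = f u (\<tau>s u)"
  shows "(SUP \<sigma>\<in>T. \<Sum>u\<in>S. d u * h \<sigma> u) = (\<Sum>u\<in>S. d u * (SUP \<tau>\<in>T. f u \<tau>))"
proof -
  have "(INF \<sigma>\<in>T. \<Sum>u\<in>S. d u * (- h \<sigma> u)) = (\<Sum>u\<in>S. d u * (INF \<tau>\<in>T. - f u \<tau>))"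
    by (rule cINF_weighted_sum_glued[OF S d T, where f="\<lambda>u \<tau>. - f u \<tau>" and B=B and h="\<lambda>\<sigma> u. - h \<sigma> u"])
       (use bounded restrict glue in \<open>force+\<close>)
  then show ?thesis
    by (simp add: real_SUP_eq_uminus_INF[of _ T] sum_negf flip: sum_negf)
qed

lemma abs_det_le_prod_row_sums:
  fixes M :: "real^'n^'n"
  shows "\<bar>det M\<bar> \<le> (\<Prod>i\<in>UNIV. \<Sum>j\<in>UNIV. \<bar>M $ i $ j\<bar>)"
proof -
  have "\<bar>det M\<bar> \<le> (\<Sum>p\<in>{p. p permutes (UNIV :: 'n set)}. \<bar>of_int (sign p) * (\<Prod>i\<in>UNIV. M $ i $ p i)\<bar>)"
    unfolding det_def by (rule sum_abs)
  also have "\<dots> = (\<Sum>p\<in>{p. p permutes (UNIV :: 'n set)}. \<Prod>i\<in>UNIV. \<bar>M $ i $ p i\<bar>)"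
    by (intro sum.cong refl) (simp add: abs_mult abs_prod sign_def)
  also have "\<dots> \<le> (\<Sum>p\<in>PiE UNIV (\<lambda>_. UNIV). \<Prod>i\<in>UNIV. \<bar>M $ i $ p i\<bar>)"
    by (intro sum_mono2) (auto intro: finite_PiE prod_nonneg)
  also have "\<dots> = (\<Prod>i\<in>UNIV. \<Sum>j\<in>UNIV. \<bar>M $ i $ j\<bar>)"
    by (rule prod_sum_PiE[symmetric]) auto
  finally show ?thesis .
qed

lemma det_Ints:
  fixes M :: "real^'n^'n"
  assumes "\<And>i j. M $ i $ j \<in> \<int>"
  shows "det M \<in> \<int>"
  unfolding det_def using assms by (intro Ints_sum Ints_mult Ints_prod Ints_of_int) auto

lemma Cramer_mult_det_Ints:
  fixes A :: "real^'n^'n"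
  assumes "\<And>i j. A $ i $ j \<in> \<int>" and "\<And>i. (A *v x) $ i \<in> \<int>"
  shows "x $ k * det A \<in> \<int>"
proof -
  have "det (\<chi> i j. if j = k then (A *v x) $ i else A $ i $ j) \<in> \<int>"
    using assms by (intro det_Ints) simp
  then show ?thesis
    by (simp add: cramer_lemma)
qed

section \<open>Play measures\<close>

fun choice_history :: "('a list \<Rightarrow> 'a) \<Rightarrow> 'a \<Rightarrow> nat \<Rightarrow> 'a list" where
  "choice_history c v 0 = [v]"
| "choice_history c v (Suc n) = choice_history c v n @ [c (choice_history c v n)]"

lemma length_choice_history [simp]: "length (choice_history c v n) = Suc n"
  by (induction n) auto

lemma choice_history_neq_Nil [simp]: "choice_history c v n \<noteq> []"
  by (cases n) simp_all

lemma take_choice_history: "i \<le> n \<Longrightarrow> take (Suc i) (choice_history c v n) = choice_history c v i"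
proof (induction n)
  case (Suc n)
  then show ?case
    by (cases "i = Suc n") auto
qed auto

lemma choice_history_eq_iff:
  assumes "length h = Suc k"
  shows "choice_history c v k = h \<longleftrightarrow> hd h = v \<and> (\<forall>i<k. c (take (Suc i) h) = h ! Suc i)"
  using assms
proof (induction k arbitrary: h)
  case 0
  then show ?case
    by (cases h) auto
next
  case (Suc k)
  obtain h' a where h: "h = h' @ [a]" and h': "length h' = Suc k"
    using Suc.prems by (metis length_Suc_conv_rev length_append_singleton Suc_inject)
  have "choice_history c v (Suc k) = h \<longleftrightarrow> choice_history c v k = h' \<and> c h' = a"
    by (auto simp: h)
  also have "\<dots> \<longleftrightarrow> hd h' = v \<and> (\<forall>i<k. c (take (Suc i) h') = h' ! Suc i) \<and> c h' = a"
    using Suc.IH[OF h'] by simp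
  also have "\<dots> \<longleftrightarrow> hd h = v \<and> (\<forall>i<Suc k. c (take (Suc i) h) = h ! Suc i)"
    using h' by (cases h') (auto simp: h less_Suc_eq nth_append)
  finally show ?case .
qed

definition choice_play :: "'a \<Rightarrow> ('a list \<Rightarrow> 'a) \<Rightarrow> 'a stream" where
  "choice_play v c = to_stream (\<lambda>n. last (choice_history c v n))"

lemma snth_choice_play: "choice_play v c !! n = last (choice_history c v n)"
  by (simp add: choice_play_def to_stream_def)

lemma stake_choice_play: "stake (Suc n) (choice_play v c) = choice_history c v n"
proof (rule nth_equalityI)
  fix i assume "i < length (stake (Suc n) (choice_play v c))"
  then have "i \<le> n"
    by simp
  then have "last (choice_history c v i) = last (take (Suc i) (choice_history c v n))"
    by (simp add: take_choice_history)
  also have "\<dots> = choice_history c v n ! i"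
    using \<open>i \<le> n\<close> by (simp add: last_conv_nth min_def)
  finally show "stake (Suc n) (choice_play v c) ! i = choice_history c v n ! i"
    using \<open>i \<le> n\<close> by (simp add: snth_choice_play stake_nth del: stake.simps)
qed simp

lemma measurable_choice_history:
  fixes v :: "'a::countable"
  assumes "\<And>h. sets (M h) = UNIV"
  shows "(\<lambda>c. choice_history c v n) \<in> Pi\<^sub>M UNIV M \<rightarrow>\<^sub>M count_space UNIV"
proof (induction n)
  case (Suc n)
  have "(\<lambda>c. h @ [c h]) \<in> Pi\<^sub>M UNIV M \<rightarrow>\<^sub>M count_space UNIV" for h
  proof (rule measurable_compose[of _ _ "M h"])
    show "(\<lambda>c. c h) \<in> Pi\<^sub>M UNIV M \<rightarrow>\<^sub>M M h"
      by (rule measurable_component_singleton) simp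
    show "(\<lambda>a. h @ [a]) \<in> M h \<rightarrow>\<^sub>M count_space UNIV"
      using assms[of h] by (simp add: measurable_def)
  qed
  then have "(\<lambda>c. (\<lambda>h c. h @ [c h]) (choice_history c v n) c) \<in> Pi\<^sub>M UNIV M \<rightarrow>\<^sub>M count_space UNIV"
    by (rule measurable_compose_countable[OF _ Suc.IH])
  then show ?case
    by simp
qed simp

lemma measurable_choice_play:
  fixes v :: "'a::countable"
  assumes "\<And>h. sets (M h) = UNIV"
  shows "choice_play v \<in> Pi\<^sub>M UNIV M \<rightarrow>\<^sub>M stream_space (count_space UNIV)"
proof (rule measurable_stream_space2)
  fix n
  have "(\<lambda>c. last (stake (Suc n) (choice_play v c))) \<in> Pi\<^sub>M UNIV M \<rightarrow>\<^sub>M count_space UNIV"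
    unfolding stake_choice_play by (rule measurable_compose[OF measurable_choice_history[OF assms]]) simp
  then show "(\<lambda>c. choice_play v c !! n) \<in> Pi\<^sub>M UNIV M \<rightarrow>\<^sub>M count_space UNIV"
    by (simp add: last_conv_nth stake_nth del: stake.simps)
qed

lemma sstart_UNIV: "sstart UNIV xs = {\<omega>. stake (length xs) \<omega> = xs}"
  by (auto simp: sstart_eq list_eq_iff_nth_eq stake_nth simp del: stake.simps)

lemma stream_space_prob_eqI:
  fixes M N :: "'a::countable stream measure"
  assumes "sets M = sets (stream_space (count_space UNIV))"
    and "sets N = sets (stream_space (count_space UNIV))"
    and "prob_space M" and "prob_space N"
    and cylinders: "\<And>h. h \<noteq> [] \<Longrightarrow> measure M {\<omega> \<in> space M. stake (length h) \<omega> = h}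
                                    = measure N {\<omega> \<in> space N. stake (length h) \<omega> = h}"
  shows "M = N"
proof (rule stream_space_eq_sstart[where S=UNIV])
  interpret M: prob_space M by fact
  interpret N: prob_space N by fact
  have "space M = UNIV" "space N = UNIV"
    using assms(1,2)[THEN sets_eq_imp_space_eq] by (simp_all add: space_stream_space)
  then show "emeasure M (sstart UNIV xs) = emeasure N (sstart UNIV xs)" if "xs \<noteq> []" for xs
    using cylinders[OF that] by (simp add: sstart_UNIV M.emeasure_eq_measure N.emeasure_eq_measure)
qed (use assms in auto)

lemma is_play_scons:
  assumes "is_play E \<omega>" and "(v, shd \<omega>) \<in> E"
  shows "is_play E (v ## \<omega>)"
  unfolding is_play_def
proof
  fix i
  show "((v ## \<omega>) !! i, (v ## \<omega>) !! Suc i) \<in> E"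
    using assms unfolding is_play_def by (cases i) auto
qed

lemma prefix_independent_scons:
  assumes "prefix_independent E \<phi>" and "is_play E \<omega>" and "(v, shd \<omega>) \<in> E"
  shows "\<phi> (v ## \<omega>) = \<phi> \<omega>"
proof -
  have "sdrop 1 (v ## \<omega>) = sdrop 0 \<omega>"
    by simp
  then show ?thesis
    using assms is_play_scons[OF assms(2,3)] unfolding prefix_independent_def by blast
qed

locale stoch_game =
  fixes E :: "('v::finite \<times> 'v) set" and V1 V2 Vp :: "'v set" and \<delta> :: "'v \<Rightarrow> 'v \<Rightarrow> rat"
  assumes game: "stochastic_game E V1 V2 Vp \<delta>"
begin

lemma succs_nonempty: "succs E v \<noteq> {}"
  and Vp_disjoint: "v \<in> Vp \<Longrightarrow> v \<notin> V1 \<and> v \<notin> V2"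
  and not_V1_V2: "v \<notin> V1 \<Longrightarrow> v \<notin> V2 \<Longrightarrow> v \<in> Vp"
  and \<delta>_pos: "v \<in> Vp \<Longrightarrow> u \<in> succs E v \<Longrightarrow> \<delta> v u > 0"
  and \<delta>_sum: "v \<in> Vp \<Longrightarrow> (\<Sum>u\<in>succs E v. \<delta> v u) = 1"
  using game unfolding stochastic_game_def by blast+

abbreviation \<Omega> :: "'v stream measure" where
  "\<Omega> \<equiv> stream_space (count_space UNIV)"

abbreviation \<mu> :: "('v list \<Rightarrow> 'v) \<Rightarrow> ('v list \<Rightarrow> 'v) \<Rightarrow> 'v \<Rightarrow> 'v stream measure" where
  "\<mu> \<sigma>1 \<sigma>2 v \<equiv> play_measure E V1 V2 \<delta> \<sigma>1 \<sigma>2 v"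

definition move_pmf :: "'v \<Rightarrow> 'v pmf" where
  "move_pmf x = embed_pmf (\<lambda>u. if u \<in> succs E x then real_of_rat (\<delta> x u) else 0)"

lemma pmf_move_pmf:
  assumes "x \<in> Vp"
  shows "pmf (move_pmf x) u = (if u \<in> succs E x then real_of_rat (\<delta> x u) else 0)"
  unfolding move_pmf_def
proof (rule pmf_embed_pmf)
  show "0 \<le> (if u \<in> succs E x then real_of_rat (\<delta> x u) else 0)" for u
    using \<delta>_pos[OF assms] by (simp add: less_imp_le)
  then have "(\<integral>\<^sup>+ u. ennreal (if u \<in> succs E x then real_of_rat (\<delta> x u) else 0) \<partial>count_space UNIV)
      = ennreal (\<Sum>u\<in>succs E x. real_of_rat (\<delta> x u))"
    by (simp add: nn_integral_count_space_finite sum_ennreal sum.If_cases)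
  also have "\<dots> = 1"
    using \<delta>_sum[OF assms] by (simp flip: of_rat_sum)
  finally show "(\<integral>\<^sup>+ u. ennreal (if u \<in> succs E x then real_of_rat (\<delta> x u) else 0) \<partial>count_space UNIV) = 1" .
qed

definition step_pmf :: "('v list \<Rightarrow> 'v) \<Rightarrow> ('v list \<Rightarrow> 'v) \<Rightarrow> 'v list \<Rightarrow> 'v pmf" where
  "step_pmf \<sigma>1 \<sigma>2 h =
     (if last h \<in> V1 then return_pmf (\<sigma>1 h) else if last h \<in> V2 then return_pmf (\<sigma>2 h) else move_pmf (last h))"

lemma pmf_step_pmf: "pmf (step_pmf \<sigma>1 \<sigma>2 h) u = step_prob E V1 V2 \<delta> \<sigma>1 \<sigma>2 h u"
  using not_V1_V2[of "last h"] unfolding step_pmf_def step_prob_def by (auto simp: pmf_move_pmf pmf_return)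

lemma prefix_prob_nonneg: "prefix_prob E V1 V2 \<delta> \<sigma>1 \<sigma>2 v h \<ge> 0"
  unfolding prefix_prob_def by (auto intro!: prod_nonneg simp flip: pmf_step_pmf)

definition is_play_measure :: "('v list \<Rightarrow> 'v) \<Rightarrow> ('v list \<Rightarrow> 'v) \<Rightarrow> 'v \<Rightarrow> 'v stream measure \<Rightarrow> bool" where
  "is_play_measure \<sigma>1 \<sigma>2 v M \<longleftrightarrow> sets M = sets \<Omega> \<and> prob_space M \<and>
     (\<forall>h. h \<noteq> [] \<longrightarrow> measure M {\<omega> \<in> space M. stake (length h) \<omega> = h} = prefix_prob E V1 V2 \<delta> \<sigma>1 \<sigma>2 v h)"

lemma emeasure_choice_history:
  assumes "length h = Suc k"
  shows "emeasure (\<Pi>\<^sub>M g\<in>UNIV. measure_pmf (step_pmf \<sigma>1 \<sigma>2 g))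
           {c \<in> space (\<Pi>\<^sub>M g\<in>UNIV. measure_pmf (step_pmf \<sigma>1 \<sigma>2 g)). choice_history c v k = h}
         = ennreal (prefix_prob E V1 V2 \<delta> \<sigma>1 \<sigma>2 v h)"
    (is "emeasure ?PM ?A = _")
proof (cases "hd h = v")
  case False
  then show ?thesis
    using choice_history_eq_iff[OF assms] by (simp add: prefix_prob_def)
next
  case True
  interpret product_prob_space "\<lambda>g. measure_pmf (step_pmf \<sigma>1 \<sigma>2 g)" UNIV
    by (intro product_prob_spaceI) (simp add: measure_pmf.prob_space_axioms)
  define J where "J = (\<lambda>i. take (Suc i) h) ` {..<k}"
  have inj: "inj_on (\<lambda>i. take (Suc i) h) {..<k}"
    using assms by (intro inj_onI) (metis length_take lessThan_iff min.absorb4 Suc_inject not_less_eq order.strict_trans)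
  have "?A = {c \<in> space ?PM. \<forall>g\<in>J. c g \<in> {h ! length g}}"
    using choice_history_eq_iff[OF assms] True assms by (auto simp: J_def min_def)
  also have "emeasure ?PM \<dots> = (\<Prod>g\<in>J. emeasure (measure_pmf (step_pmf \<sigma>1 \<sigma>2 g)) {h ! length g})"
    by (rule emeasure_PiM_Collect) (auto simp: J_def)
  also have "\<dots> = (\<Prod>i<k. ennreal (step_prob E V1 V2 \<delta> \<sigma>1 \<sigma>2 (take (Suc i) h) (h ! Suc i)))"
    unfolding J_def using assms
    by (subst prod.reindex[OF inj]) (auto simp: min_def emeasure_pmf_single pmf_step_pmf intro!: prod.cong)
  also have "\<dots> = ennreal (prefix_prob E V1 V2 \<delta> \<sigma>1 \<sigma>2 v h)"
    using True assms by (simp add: prefix_prob_def prod_ennreal flip: pmf_step_pmf)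
  finally show ?thesis .
qed

text \<open>
  A point of the product space fixes a successor for every history; the play that follows these
  choices from v has cylinder probabilities that are products of one-step probabilities.
\<close>

lemma is_play_measure_exists: "\<exists>M. is_play_measure \<sigma>1 \<sigma>2 v M"
proof -
  define PM where "PM = (\<Pi>\<^sub>M g\<in>UNIV. measure_pmf (step_pmf \<sigma>1 \<sigma>2 g))"
  interpret product_prob_space "\<lambda>g. measure_pmf (step_pmf \<sigma>1 \<sigma>2 g)" UNIV
    by (intro product_prob_spaceI) (simp add: measure_pmf.prob_space_axioms)
  have play: "choice_play v \<in> PM \<rightarrow>\<^sub>M \<Omega>"
    unfolding PM_def by (rule measurable_choice_play) simp
  define M where "M = distr PM \<Omega> (choice_play v)"
  have "sets M = sets \<Omega>"
    by (simp add: M_def)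
  moreover have "prob_space M"
    unfolding M_def PM_def by (rule prob_space_distr) (use play PM_def in simp)
  moreover have "measure M {\<omega> \<in> space M. stake (length h) \<omega> = h} = prefix_prob E V1 V2 \<delta> \<sigma>1 \<sigma>2 v h"
    if h: "h \<noteq> []" for h
  proof -
    obtain k where k: "length h = Suc k"
      using h by (cases h) auto
    have "{\<omega> \<in> space M. stake (length h) \<omega> = h} \<in> sets \<Omega>"
      using sets_sstart[of UNIV h] by (simp add: M_def space_stream_space sstart_UNIV)
    then have "emeasure M {\<omega> \<in> space M. stake (length h) \<omega> = h}
        = emeasure PM {c \<in> space PM. choice_history c v k = h}"
      unfolding M_def using play stake_choice_play[of k v]
      by (subst emeasure_distr) (auto simp: k space_stream_space simp del: stake.simps intro!: arg_cong2[where f=emeasure])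
    then show ?thesis
      unfolding PM_def emeasure_choice_history[OF k] by (simp add: measure_def prefix_prob_nonneg)
  qed
  ultimately show ?thesis
    unfolding is_play_measure_def by blast
qed

lemma is_play_measure_play_measure: "is_play_measure \<sigma>1 \<sigma>2 v (\<mu> \<sigma>1 \<sigma>2 v)"
  using someI_ex[OF is_play_measure_exists] unfolding play_measure_def is_play_measure_def .

lemma sets_play_measure [measurable_cong]: "sets (\<mu> \<sigma>1 \<sigma>2 v) = sets \<Omega>"
  and prob_space_play_measure: "prob_space (\<mu> \<sigma>1 \<sigma>2 v)"
  using is_play_measure_play_measure unfolding is_play_measure_def by blast+

lemma play_measure_eqI: "is_play_measure \<sigma>1 \<sigma>2 v M \<Longrightarrow> \<mu> \<sigma>1 \<sigma>2 v = M"
  using is_play_measure_play_measure[of \<sigma>1 \<sigma>2 v] unfolding is_play_measure_def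
  by (intro stream_space_prob_eqI) auto

lemma prefix_prob_cong:
  assumes "\<And>h. h \<noteq> [] \<Longrightarrow> hd h = v \<Longrightarrow> \<sigma>1 h = \<sigma>1' h \<and> \<sigma>2 h = \<sigma>2' h"
  shows "prefix_prob E V1 V2 \<delta> \<sigma>1 \<sigma>2 v h = prefix_prob E V1 V2 \<delta> \<sigma>1' \<sigma>2' v h"
proof (cases "hd h = v")
  case True
  have "step_prob E V1 V2 \<delta> \<sigma>1 \<sigma>2 (take (Suc i) h) u = step_prob E V1 V2 \<delta> \<sigma>1' \<sigma>2' (take (Suc i) h) u"
    if "i < length h - 1" for i u
    using assms[of "take (Suc i) h"] that True by (cases h) (auto simp: step_prob_def)
  then show ?thesis
    unfolding prefix_prob_def by (auto intro!: prod.cong)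
qed (simp add: prefix_prob_def)

lemma play_measure_cong:
  assumes "\<And>h. h \<noteq> [] \<Longrightarrow> hd h = v \<Longrightarrow> \<sigma>1 h = \<sigma>1' h \<and> \<sigma>2 h = \<sigma>2' h"
  shows "\<mu> \<sigma>1 \<sigma>2 v = \<mu> \<sigma>1' \<sigma>2' v"
proof -
  have "prefix_prob E V1 V2 \<delta> \<sigma>1 \<sigma>2 v h = prefix_prob E V1 V2 \<delta> \<sigma>1' \<sigma>2' v h" for h
    by (rule prefix_prob_cong) (use assms in blast)
  then have "is_play_measure \<sigma>1' \<sigma>2' v (\<mu> \<sigma>1 \<sigma>2 v)"
    using is_play_measure_play_measure[of \<sigma>1 \<sigma>2 v] unfolding is_play_measure_def by simp
  then show ?thesis
    by (rule play_measure_eqI[symmetric])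
qed

lemma AE_not_null_cylinder:
  assumes "h \<noteq> []" and "prefix_prob E V1 V2 \<delta> \<sigma>1 \<sigma>2 v h = 0"
  shows "AE \<omega> in \<mu> \<sigma>1 \<sigma>2 v. stake (length h) \<omega> \<noteq> h"
proof -
  interpret prob_space "\<mu> \<sigma>1 \<sigma>2 v"
    by (rule prob_space_play_measure)
  have "{\<omega> \<in> space (\<mu> \<sigma>1 \<sigma>2 v). stake (length h) \<omega> = h} \<in> sets (\<mu> \<sigma>1 \<sigma>2 v)"
    using sets_sstart[of UNIV h] sets_eq_imp_space_eq[OF sets_play_measure]
    by (simp add: space_stream_space sstart_UNIV)
  moreover have "measure (\<mu> \<sigma>1 \<sigma>2 v) {\<omega> \<in> space (\<mu> \<sigma>1 \<sigma>2 v). stake (length h) \<omega> = h} = 0"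
    using is_play_measure_play_measure[of \<sigma>1 \<sigma>2 v] assms unfolding is_play_measure_def by simp
  ultimately show ?thesis
    by (intro AE_I'[of "{\<omega> \<in> space (\<mu> \<sigma>1 \<sigma>2 v). stake (length h) \<omega> = h}"])
       (auto simp: emeasure_eq_measure)
qed

lemma AE_is_play:
  assumes "\<sigma>1 \<in> strategies E V1" and "\<sigma>2 \<in> strategies E V2"
  shows "AE \<omega> in \<mu> \<sigma>1 \<sigma>2 v. is_play E \<omega> \<and> shd \<omega> = v"
proof -
  let ?pp = "prefix_prob E V1 V2 \<delta> \<sigma>1 \<sigma>2 v"
  have "AE \<omega> in \<mu> \<sigma>1 \<sigma>2 v. \<forall>h. h \<noteq> [] \<and> ?pp h = 0 \<longrightarrow> stake (length h) \<omega> \<noteq> h"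
    by (subst AE_all_countable) (auto intro: AE_not_null_cylinder)
  then show ?thesis
  proof (rule AE_mp, intro AE_I2 impI)
    fix \<omega> :: "'v stream"
    assume H: "\<forall>h. h \<noteq> [] \<and> ?pp h = 0 \<longrightarrow> stake (length h) \<omega> \<noteq> h"
    have nz: "?pp (stake (Suc n) \<omega>) \<noteq> 0" for n
      using H[rule_format, of "stake (Suc n) \<omega>"] by (auto simp del: stake.simps)
    have "shd \<omega> = v"
      using nz[of 0] by (auto simp: prefix_prob_def split: if_splits)
    moreover have "(\<omega> !! i, \<omega> !! Suc i) \<in> E" for i
    proof -
      have "step_prob E V1 V2 \<delta> \<sigma>1 \<sigma>2 (stake (Suc i) \<omega>) (\<omega> !! Suc i) \<noteq> 0"
        using nz[of "Suc i"]
        by (auto simp: prefix_prob_def take_stake stake_nth split: if_splits simp del: stake.simps)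
      then show ?thesis
        using assms unfolding step_prob_def strategies_def succs_def
        by (auto simp: last_conv_nth stake_nth split: if_splits simp del: stake.simps)
    qed
    ultimately show "is_play E \<omega> \<and> shd \<omega> = v"
      by (simp add: is_play_def)
  qed
qed

section \<open>The value at a random vertex is an average\<close>

definition shift_strategy :: "'v \<Rightarrow> ('v list \<Rightarrow> 'v) \<Rightarrow> 'v list \<Rightarrow> 'v" where
  "shift_strategy v \<sigma> = (\<lambda>h. \<sigma> (v # h))"

lemma shift_strategy_in_strategies: "\<sigma> \<in> strategies E Vi \<Longrightarrow> shift_strategy v \<sigma> \<in> strategies E Vi"
  unfolding strategies_def shift_strategy_def by auto

definition cons_cylinder_prob ::
  "('v list \<Rightarrow> 'v) \<Rightarrow> ('v list \<Rightarrow> 'v) \<Rightarrow> 'v \<Rightarrow> 'v \<Rightarrow> 'v list \<Rightarrow> real" where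
  "cons_cylinder_prob \<tau>1 \<tau>2 v u h =
     (if hd h \<noteq> v then 0 else if tl h = [] then 1 else prefix_prob E V1 V2 \<delta> \<tau>1 \<tau>2 u (tl h))"

lemma step_prob_shift_strategy:
  "h \<noteq> [] \<Longrightarrow> step_prob E V1 V2 \<delta> (shift_strategy v \<sigma>1) (shift_strategy v \<sigma>2) h u
    = step_prob E V1 V2 \<delta> \<sigma>1 \<sigma>2 (v # h) u"
  unfolding step_prob_def shift_strategy_def by simp

lemma prefix_prob_random_vertex:
  assumes "v \<in> Vp" and "h \<noteq> []"
  shows "prefix_prob E V1 V2 \<delta> \<sigma>1 \<sigma>2 v h =
    (\<Sum>u\<in>UNIV. pmf (move_pmf v) u * cons_cylinder_prob (shift_strategy v \<sigma>1) (shift_strategy v \<sigma>2) v u h)"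
proof (cases "hd h = v \<and> tl h \<noteq> []")
  case True
  then obtain b t where h: "h = v # b # t"
    using assms(2) by (cases h rule: remdups_adj.cases) auto
  define P where "P = (\<Prod>i<length t. step_prob E V1 V2 \<delta> (shift_strategy v \<sigma>1) (shift_strategy v \<sigma>2)
                         (take (Suc i) (b # t)) ((b # t) ! Suc i))"
  have "(\<Sum>u\<in>UNIV. pmf (move_pmf v) u * cons_cylinder_prob (shift_strategy v \<sigma>1) (shift_strategy v \<sigma>2) v u h)
      = (\<Sum>u\<in>UNIV. pmf (move_pmf v) u * (if b = u then P else 0))"
    by (auto simp: h cons_cylinder_prob_def prefix_prob_def P_def intro!: sum.cong)
  also have "\<dots> = pmf (move_pmf v) b * P"
    by (simp add: if_distrib sum.delta cong: if_cong)
  also have "pmf (move_pmf v) b = step_prob E V1 V2 \<delta> \<sigma>1 \<sigma>2 [v] b"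
    using Vp_disjoint[OF assms(1)] assms(1) by (simp add: step_prob_def pmf_move_pmf)
  also have "P = (\<Prod>i<length t. step_prob E V1 V2 \<delta> \<sigma>1 \<sigma>2 (take (Suc (Suc i)) h) (h ! Suc (Suc i)))"
    unfolding P_def h by (intro prod.cong refl) (simp add: step_prob_shift_strategy)
  also have "step_prob E V1 V2 \<delta> \<sigma>1 \<sigma>2 [v] b * \<dots> = prefix_prob E V1 V2 \<delta> \<sigma>1 \<sigma>2 v h"
    by (simp add: h prefix_prob_def prod.lessThan_Suc_shift del: prod.lessThan_Suc)
  finally show ?thesis ..
next
  case False
  then consider "hd h \<noteq> v" | "h = [v]"
    using assms(2) by (cases h) auto
  then show ?thesis
    by cases (simp_all add: cons_cylinder_prob_def prefix_prob_def sum_pmf_eq_1)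
qed

lemma prob_algebra_distr_scons: "distr (\<mu> \<tau>1 \<tau>2 u) \<Omega> ((##) v) \<in> space (prob_algebra \<Omega>)"
  using prob_space_play_measure by (auto simp: space_prob_algebra intro!: prob_space.prob_space_distr)

lemma emeasure_cons_cylinder:
  assumes "h \<noteq> []"
  shows "emeasure (distr (\<mu> \<tau>1 \<tau>2 u) \<Omega> ((##) v)) {\<omega>. stake (length h) \<omega> = h}
    = ennreal (cons_cylinder_prob \<tau>1 \<tau>2 v u h)"
proof -
  interpret prob_space "\<mu> \<tau>1 \<tau>2 u"
    by (rule prob_space_play_measure)
  have space: "space (\<mu> \<tau>1 \<tau>2 u) = UNIV"
    using sets_eq_imp_space_eq[OF sets_play_measure] by (simp add: space_stream_space)
  obtain a t where h: "h = a # t"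
    using assms by (cases h) auto
  have "{\<omega>. stake (length h) \<omega> = h} \<in> sets \<Omega>"
    using sets_sstart[of UNIV h] by (simp add: sstart_UNIV)
  then have "emeasure (distr (\<mu> \<tau>1 \<tau>2 u) \<Omega> ((##) v)) {\<omega>. stake (length h) \<omega> = h}
      = emeasure (\<mu> \<tau>1 \<tau>2 u) (if a = v then {\<omega> \<in> space (\<mu> \<tau>1 \<tau>2 u). stake (length t) \<omega> = t} else {})"
    by (simp add: emeasure_distr h space vimage_def)
  also have "\<dots> = ennreal (cons_cylinder_prob \<tau>1 \<tau>2 v u h)"
    using is_play_measure_play_measure[of \<tau>1 \<tau>2 u] prob_space[unfolded space]
    by (auto simp: h cons_cylinder_prob_def is_play_measure_def emeasure_eq_measure space)
  finally show ?thesis .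
qed

lemma play_measure_random_vertex:
  assumes "v \<in> Vp"
  shows "\<mu> \<sigma>1 \<sigma>2 v = measure_pmf (move_pmf v) \<bind>
    (\<lambda>u. distr (\<mu> (shift_strategy v \<sigma>1) (shift_strategy v \<sigma>2) u) \<Omega> ((##) v))"
proof (rule play_measure_eqI)
  let ?M = "measure_pmf (move_pmf v)"
  let ?K = "\<lambda>u. distr (\<mu> (shift_strategy v \<sigma>1) (shift_strategy v \<sigma>2) u) \<Omega> ((##) v)"
  have M: "?M \<in> space (prob_algebra ?M)"
    by (simp add: space_prob_algebra measure_pmf.prob_space_axioms)
  have K: "?K \<in> ?M \<rightarrow>\<^sub>M prob_algebra \<Omega>"
    using prob_algebra_distr_scons by simp
  have space: "space (?M \<bind> ?K) = UNIV"
    using sets_eq_imp_space_eq[OF sets_bind'[OF M K]] by (simp add: space_stream_space)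
  have "measure (?M \<bind> ?K) {\<omega>. stake (length h) \<omega> = h} = prefix_prob E V1 V2 \<delta> \<sigma>1 \<sigma>2 v h"
    if "h \<noteq> []" for h
  proof -
    have "emeasure (?M \<bind> ?K) {\<omega>. stake (length h) \<omega> = h}
        = (\<integral>\<^sup>+u. emeasure (?K u) {\<omega>. stake (length h) \<omega> = h} \<partial>?M)"
      using sets_sstart[of UNIV h] by (intro emeasure_bind_prob_algebra[OF M K]) (simp add: sstart_UNIV)
    also have "\<dots> = (\<Sum>u\<in>UNIV. ennreal (pmf (move_pmf v) u * cons_cylinder_prob (shift_strategy v \<sigma>1) (shift_strategy v \<sigma>2) v u h))"
      using \<open>h \<noteq> []\<close> by (simp add: nn_integral_measure_pmf nn_integral_count_space_finite emeasure_cons_cylinder ennreal_mult' cons_cylinder_prob_def prefix_prob_nonneg)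
    also have "\<dots> = ennreal (prefix_prob E V1 V2 \<delta> \<sigma>1 \<sigma>2 v h)"
      using prefix_prob_random_vertex[OF assms \<open>h \<noteq> []\<close>]
      by (simp add: sum_ennreal cons_cylinder_prob_def prefix_prob_nonneg)
    finally show ?thesis
      by (simp add: measure_def prefix_prob_nonneg)
  qed
  then show "is_play_measure \<sigma>1 \<sigma>2 v (?M \<bind> ?K)"
    unfolding is_play_measure_def using sets_bind'[OF M K] prob_space_bind'[OF M K] space by simp
qed

lemma integral_distr_scons:
  assumes "\<tau>1 \<in> strategies E V1" and "\<tau>2 \<in> strategies E V2" and "u \<in> succs E v"
    and \<phi>: "\<phi> \<in> borel_measurable \<Omega>"
    and cons_inv: "\<And>\<omega>. is_play E \<omega> \<Longrightarrow> (v, shd \<omega>) \<in> E \<Longrightarrow> \<phi> (v ## \<omega>) = \<phi> \<omega>"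
  shows "integral\<^sup>L (distr (\<mu> \<tau>1 \<tau>2 u) \<Omega> ((##) v)) \<phi> = expected E V1 V2 \<delta> \<tau>1 \<tau>2 u \<phi>"
proof -
  have "integral\<^sup>L (distr (\<mu> \<tau>1 \<tau>2 u) \<Omega> ((##) v)) \<phi> = (\<integral>\<omega>. \<phi> (v ## \<omega>) \<partial>\<mu> \<tau>1 \<tau>2 u)"
    using \<phi> by (intro integral_distr) simp_all
  also have "\<dots> = expected E V1 V2 \<delta> \<tau>1 \<tau>2 u \<phi>"
    unfolding expected_def
  proof (rule integral_cong_AE)
    show "AE \<omega> in \<mu> \<tau>1 \<tau>2 u. \<phi> (v ## \<omega>) = \<phi> \<omega>"
      using AE_is_play[OF assms(1,2), of u] by (rule AE_mp) (use assms(3) cons_inv in \<open>auto simp: succs_def\<close>)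
  qed (use \<phi> in simp_all)
  finally show ?thesis .
qed

lemma expected_random_vertex:
  assumes "v \<in> Vp" and "\<sigma>1 \<in> strategies E V1" and "\<sigma>2 \<in> strategies E V2"
    and \<phi>: "\<phi> \<in> borel_measurable \<Omega>" and bounded: "\<And>\<omega>. \<bar>\<phi> \<omega>\<bar> \<le> B"
    and cons_inv: "\<And>\<omega>. is_play E \<omega> \<Longrightarrow> (v, shd \<omega>) \<in> E \<Longrightarrow> \<phi> (v ## \<omega>) = \<phi> \<omega>"
  shows "expected E V1 V2 \<delta> \<sigma>1 \<sigma>2 v \<phi> = (\<Sum>u\<in>succs E v.
           real_of_rat (\<delta> v u) * expected E V1 V2 \<delta> (shift_strategy v \<sigma>1) (shift_strategy v \<sigma>2) u \<phi>)"
proof -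
  let ?K = "\<lambda>u. distr (\<mu> (shift_strategy v \<sigma>1) (shift_strategy v \<sigma>2) u) \<Omega> ((##) v)"
  have K: "?K \<in> measure_pmf (move_pmf v) \<rightarrow>\<^sub>M subprob_algebra \<Omega>"
    using prob_algebra_distr_scons by (auto simp: space_prob_algebra prob_space_imp_subprob_space space_subprob_algebra)
  have "expected E V1 V2 \<delta> \<sigma>1 \<sigma>2 v \<phi> = integral\<^sup>L (measure_pmf (move_pmf v) \<bind> ?K) \<phi>"
    unfolding expected_def by (subst play_measure_random_vertex[OF assms(1)]) rule
  also have "\<dots> = (\<integral>u. integral\<^sup>L (?K u) \<phi> \<partial>measure_pmf (move_pmf v))"
  proof (rule integral_bind[OF \<phi> _ K, where B=B and B'=1])
    show "AE u in measure_pmf (move_pmf v). emeasure (?K u) (space (?K u)) \<le> ennreal 1"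
    proof (rule AE_I2)
      fix u
      interpret prob_space "?K u"
        using prob_algebra_distr_scons by (simp add: space_prob_algebra)
      show "emeasure (?K u) (space (?K u)) \<le> ennreal 1"
        using emeasure_space_1 by simp
    qed
  qed (simp_all add: bounded measure_pmf.finite_measure_axioms)
  also have "\<dots> = (\<Sum>u\<in>UNIV. pmf (move_pmf v) u * integral\<^sup>L (?K u) \<phi>)"
    by (simp add: integral_measure_pmf[of UNIV])
  also have "\<dots> = (\<Sum>u\<in>succs E v. real_of_rat (\<delta> v u) * integral\<^sup>L (?K u) \<phi>)"
    using assms(1) by (simp add: pmf_move_pmf sum_if_mem_mult)
  also have "\<dots> = (\<Sum>u\<in>succs E v.
      real_of_rat (\<delta> v u) * expected E V1 V2 \<delta> (shift_strategy v \<sigma>1) (shift_strategy v \<sigma>2) u \<phi>)"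
    by (intro sum.cong refl arg_cong2[where f="(*)"] integral_distr_scons
        shift_strategy_in_strategies assms \<phi> cons_inv)
  finally show ?thesis .
qed

lemma strategies_nonempty: "strategies E Vi \<noteq> {}"
proof -
  have "(\<lambda>h. SOME u. u \<in> succs E (last h)) \<in> strategies E Vi"
    using succs_nonempty unfolding strategies_def by (auto simp: some_in_eq)
  then show ?thesis
    by blast
qed

definition glue_strategies ::
  "'v \<Rightarrow> 'v set \<Rightarrow> ('v \<Rightarrow> 'v list \<Rightarrow> 'v) \<Rightarrow> ('v list \<Rightarrow> 'v) \<Rightarrow> 'v list \<Rightarrow> 'v" where
  "glue_strategies v S \<tau>s \<sigma>0 h =
     (case h of a # u # t \<Rightarrow> if a = v \<and> u \<in> S then \<tau>s u (u # t) else \<sigma>0 h | _ \<Rightarrow> \<sigma>0 h)"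

lemma glue_strategies_in_strategies:
  assumes "\<sigma>0 \<in> strategies E Vi" and "\<And>u. u \<in> S \<Longrightarrow> \<tau>s u \<in> strategies E Vi"
  shows "glue_strategies v S \<tau>s \<sigma>0 \<in> strategies E Vi"
  unfolding strategies_def
proof (intro CollectI allI impI)
  fix h :: "'v list"
  assume h: "h \<noteq> [] \<and> last h \<in> Vi"
  show "glue_strategies v S \<tau>s \<sigma>0 h \<in> succs E (last h)"
  proof (cases "\<exists>u t. h = v # u # t \<and> u \<in> S")
    case True
    then obtain u t where "h = v # u # t" "u \<in> S"
      by blast
    moreover have "\<tau>s u (u # t) \<in> succs E (last (u # t))"
      using assms(2)[of u] h \<open>h = v # u # t\<close> \<open>u \<in> S\<close> unfolding strategies_def by auto
    ultimately show ?thesis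
      by (simp add: glue_strategies_def)
  next
    case False
    then have "glue_strategies v S \<tau>s \<sigma>0 h = \<sigma>0 h"
      by (auto simp: glue_strategies_def split: list.split)
    then show ?thesis
      using assms(1) h by (simp add: strategies_def)
  qed
qed

lemma shift_glue_strategies:
  "u \<in> S \<Longrightarrow> h \<noteq> [] \<Longrightarrow> hd h = u \<Longrightarrow> shift_strategy v (glue_strategies v S \<tau>s \<sigma>0) h = \<tau>s u h"
  by (cases h) (auto simp: shift_strategy_def glue_strategies_def)

lemma expected_cong:
  assumes "\<And>h. h \<noteq> [] \<Longrightarrow> hd h = u \<Longrightarrow> \<tau>1 h = \<tau>1' h \<and> \<tau>2 h = \<tau>2' h"
  shows "expected E V1 V2 \<delta> \<tau>1 \<tau>2 u \<phi> = expected E V1 V2 \<delta> \<tau>1' \<tau>2' u \<phi>"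
  unfolding expected_def by (subst play_measure_cong[OF assms]) auto

lemma abs_expected_le:
  assumes "\<phi> \<in> borel_measurable \<Omega>" and "\<And>\<omega>. \<bar>\<phi> \<omega>\<bar> \<le> B"
  shows "\<bar>expected E V1 V2 \<delta> \<sigma>1 \<sigma>2 u \<phi>\<bar> \<le> B"
proof -
  interpret prob_space "\<mu> \<sigma>1 \<sigma>2 u"
    by (rule prob_space_play_measure)
  have "integrable (\<mu> \<sigma>1 \<sigma>2 u) \<phi>"
    using assms by (intro integrable_const_bound[where B=B]) simp_all
  moreover have "- B \<le> \<phi> \<omega>" "\<phi> \<omega> \<le> B" for \<omega>
    using assms(2)[of \<omega>] by linarith+
  ultimately have "- B \<le> integral\<^sup>L (\<mu> \<sigma>1 \<sigma>2 u) \<phi>" "integral\<^sup>L (\<mu> \<sigma>1 \<sigma>2 u) \<phi> \<le> B"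
    by (auto intro: integral_ge_const integral_le_const)
  then show ?thesis
    unfolding expected_def by linarith
qed

lemma abs_INF_expected_le:
  assumes "\<phi> \<in> borel_measurable \<Omega>" and "\<And>\<omega>. \<bar>\<phi> \<omega>\<bar> \<le> B"
  shows "\<bar>INF \<tau>2\<in>strategies E V2. expected E V1 V2 \<delta> \<tau>1 \<tau>2 u \<phi>\<bar> \<le> B"
proof -
  have "- B \<le> expected E V1 V2 \<delta> \<tau>1 \<tau>2 u \<phi>" "expected E V1 V2 \<delta> \<tau>1 \<tau>2 u \<phi> \<le> B" for \<tau>2
    using abs_expected_le[OF assms, of \<tau>1 \<tau>2 u] by linarith+
  moreover obtain \<tau>2 where "\<tau>2 \<in> strategies E V2"
    using strategies_nonempty by blast
  moreover have "bdd_below ((\<lambda>\<tau>2. expected E V1 V2 \<delta> \<tau>1 \<tau>2 u \<phi>) ` strategies E V2)"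
    using calculation(1) by (intro bdd_belowI[where m="- B"]) auto
  ultimately have "(INF \<tau>2\<in>strategies E V2. expected E V1 V2 \<delta> \<tau>1 \<tau>2 u \<phi>) \<le> B"
    and "- B \<le> (INF \<tau>2\<in>strategies E V2. expected E V1 V2 \<delta> \<tau>1 \<tau>2 u \<phi>)"
    using strategies_nonempty by (auto intro: cINF_lower2 cINF_greatest)
  then show ?thesis
    by linarith
qed

lemma INF_sum_expected_shift:
  assumes "v \<in> Vp" and "\<phi> \<in> borel_measurable \<Omega>" and "\<And>\<omega>. \<bar>\<phi> \<omega>\<bar> \<le> B"
  shows "(INF \<sigma>2\<in>strategies E V2. \<Sum>u\<in>succs E v.
            real_of_rat (\<delta> v u) * expected E V1 V2 \<delta> \<tau>1 (shift_strategy v \<sigma>2) u \<phi>)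
       = (\<Sum>u\<in>succs E v. real_of_rat (\<delta> v u) * (INF \<tau>2\<in>strategies E V2. expected E V1 V2 \<delta> \<tau>1 \<tau>2 u \<phi>))"
proof (rule cINF_weighted_sum_glued[OF _ _ strategies_nonempty, where B=B])
  show "\<exists>\<sigma>\<in>strategies E V2. \<forall>u\<in>succs E v.
      expected E V1 V2 \<delta> \<tau>1 (shift_strategy v \<sigma>) u \<phi> = expected E V1 V2 \<delta> \<tau>1 (\<tau>s u) u \<phi>"
    if "\<And>u. u \<in> succs E v \<Longrightarrow> \<tau>s u \<in> strategies E V2" for \<tau>s
  proof -
    obtain \<sigma>0 where "\<sigma>0 \<in> strategies E V2"
      using strategies_nonempty by blast
    then show ?thesis
      by (intro bexI[of _ "glue_strategies v (succs E v) \<tau>s \<sigma>0"])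
         (auto intro!: expected_cong glue_strategies_in_strategies that simp: shift_glue_strategies)
  qed
qed (use assms \<delta>_pos abs_expected_le shift_strategy_in_strategies in \<open>auto simp: less_imp_le\<close>)

lemma SUP_sum_INF_expected_shift:
  assumes "v \<in> Vp" and "\<phi> \<in> borel_measurable \<Omega>" and "\<And>\<omega>. \<bar>\<phi> \<omega>\<bar> \<le> B"
  shows "(SUP \<sigma>1\<in>strategies E V1. \<Sum>u\<in>succs E v. real_of_rat (\<delta> v u) *
            (INF \<tau>2\<in>strategies E V2. expected E V1 V2 \<delta> (shift_strategy v \<sigma>1) \<tau>2 u \<phi>))
       = (\<Sum>u\<in>succs E v. real_of_rat (\<delta> v u) * game_value E V1 V2 \<delta> \<phi> u)"
  unfolding game_value_def
proof (rule cSUP_weighted_sum_glued[OF _ _ strategies_nonempty, where B=B])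
  show "\<exists>\<sigma>\<in>strategies E V1. \<forall>u\<in>succs E v.
      (INF \<tau>2\<in>strategies E V2. expected E V1 V2 \<delta> (shift_strategy v \<sigma>) \<tau>2 u \<phi>)
    = (INF \<tau>2\<in>strategies E V2. expected E V1 V2 \<delta> (\<tau>s u) \<tau>2 u \<phi>)"
    if "\<And>u. u \<in> succs E v \<Longrightarrow> \<tau>s u \<in> strategies E V1" for \<tau>s
  proof -
    obtain \<sigma>0 where "\<sigma>0 \<in> strategies E V1"
      using strategies_nonempty by blast
    then show ?thesis
      by (intro bexI[of _ "glue_strategies v (succs E v) \<tau>s \<sigma>0"])
         (auto intro!: INF_cong expected_cong glue_strategies_in_strategies that simp: shift_glue_strategies)
  qed
qed (use assms \<delta>_pos abs_INF_expected_le shift_strategy_in_strategies in \<open>auto simp: less_imp_le\<close>)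

lemma game_value_random_vertex:
  assumes "v \<in> Vp" and "\<phi> \<in> borel_measurable \<Omega>" and "\<And>\<omega>. \<bar>\<phi> \<omega>\<bar> \<le> B"
    and "\<And>\<omega>. is_play E \<omega> \<Longrightarrow> (v, shd \<omega>) \<in> E \<Longrightarrow> \<phi> (v ## \<omega>) = \<phi> \<omega>"
  shows "game_value E V1 V2 \<delta> \<phi> v = (\<Sum>u\<in>succs E v. real_of_rat (\<delta> v u) * game_value E V1 V2 \<delta> \<phi> u)"
proof -
  have "game_value E V1 V2 \<delta> \<phi> v = (SUP \<sigma>1\<in>strategies E V1. INF \<sigma>2\<in>strategies E V2.
      \<Sum>u\<in>succs E v. real_of_rat (\<delta> v u) *
        expected E V1 V2 \<delta> (shift_strategy v \<sigma>1) (shift_strategy v \<sigma>2) u \<phi>)"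
    unfolding game_value_def using assms by (intro SUP_cong INF_cong refl expected_random_vertex)
  also have "\<dots> = (SUP \<sigma>1\<in>strategies E V1. \<Sum>u\<in>succs E v. real_of_rat (\<delta> v u) *
      (INF \<tau>2\<in>strategies E V2. expected E V1 V2 \<delta> (shift_strategy v \<sigma>1) \<tau>2 u \<phi>))"
    using assms(1-3) by (intro SUP_cong refl INF_sum_expected_shift)
  also have "\<dots> = (\<Sum>u\<in>succs E v. real_of_rat (\<delta> v u) * game_value E V1 V2 \<delta> \<phi> u)"
    using assms(1-3) by (rule SUP_sum_INF_expected_shift)
  finally show ?thesis .
qed

lemma game_value_cong_plays:
  assumes "\<phi> \<in> borel_measurable \<Omega>" and "\<psi> \<in> borel_measurable \<Omega>"
    and "\<And>\<omega>. is_play E \<omega> \<Longrightarrow> \<phi> \<omega> = \<psi> \<omega>"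
  shows "game_value E V1 V2 \<delta> \<phi> = game_value E V1 V2 \<delta> \<psi>"
proof
  fix v
  have "expected E V1 V2 \<delta> \<sigma>1 \<sigma>2 v \<phi> = expected E V1 V2 \<delta> \<sigma>1 \<sigma>2 v \<psi>"
    if "\<sigma>1 \<in> strategies E V1" and "\<sigma>2 \<in> strategies E V2" for \<sigma>1 \<sigma>2
    unfolding expected_def
  proof (rule integral_cong_AE)
    show "AE \<omega> in \<mu> \<sigma>1 \<sigma>2 v. \<phi> \<omega> = \<psi> \<omega>"
      using AE_is_play[OF that] by (rule AE_mp) (use assms(3) in auto)
  qed (use assms(1,2) in simp_all)
  then show "game_value E V1 V2 \<delta> \<phi> v = game_value E V1 V2 \<delta> \<psi> v"
    unfolding game_value_def by (intro SUP_cong INF_cong refl)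
qed

lemma game_value_average:
  assumes "v \<in> Vp" and \<phi>: "\<phi> \<in> borel_measurable \<Omega>"
    and "bounded_objective E \<phi>" and "prefix_independent E \<phi>"
  shows "game_value E V1 V2 \<delta> \<phi> v = (\<Sum>u\<in>succs E v. real_of_rat (\<delta> v u) * game_value E V1 V2 \<delta> \<phi> u)"
proof -
  obtain W :: int where W: "\<And>\<omega>. is_play E \<omega> \<Longrightarrow> \<bar>\<phi> \<omega>\<bar> \<le> W"
    using assms(3) unfolding bounded_objective_def by blast
  \<comment> \<open>\<phi> is bounded on plays only; the clamped objective is bounded everywhere.\<close>
  define \<psi> where "\<psi> \<omega> = max (- of_int W) (min (of_int W) (\<phi> \<omega>))" for \<omega>
  have \<psi>: "\<psi> \<in> borel_measurable \<Omega>"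
    unfolding \<psi>_def using \<phi> by measurable
  have \<psi>_eq: "\<psi> \<omega> = \<phi> \<omega>" if "is_play E \<omega>" for \<omega>
    using W[OF that] by (simp add: \<psi>_def abs_le_iff)
  have "\<psi> (v ## \<omega>) = \<psi> \<omega>" if "is_play E \<omega>" and "(v, shd \<omega>) \<in> E" for \<omega>
    using prefix_independent_scons[OF assms(4) that] \<psi>_eq is_play_scons[OF that] that(1) by simp
  moreover have "\<bar>\<psi> \<omega>\<bar> \<le> \<bar>of_int W\<bar>" for \<omega>
    by (auto simp: \<psi>_def max_def min_def abs_if)
  ultimately have "game_value E V1 V2 \<delta> \<psi> v = (\<Sum>u\<in>succs E v. real_of_rat (\<delta> v u) * game_value E V1 V2 \<delta> \<psi> u)"
    by (intro game_value_random_vertex[OF assms(1) \<psi>])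
  then show ?thesis
    using game_value_cong_plays[OF \<phi> \<psi> \<psi>_eq[symmetric]] by simp
qed

end

section \<open>Denominators of vectors that average at random vertices\<close>

definition has_denom_le :: "real \<Rightarrow> int \<Rightarrow> bool" where
  "has_denom_le x D \<longleftrightarrow> (\<exists>p q :: int. 0 < q \<and> q \<le> D \<and> x = of_int p / of_int q)"

lemma has_denom_le_iff_Ints:
  "has_denom_le x D \<longleftrightarrow> (\<exists>q :: int. 0 < q \<and> q \<le> D \<and> x * of_int q \<in> \<int>)"
proof
  assume "has_denom_le x D"
  then show "\<exists>q :: int. 0 < q \<and> q \<le> D \<and> x * of_int q \<in> \<int>"
    unfolding has_denom_le_def by force
next
  assume "\<exists>q :: int. 0 < q \<and> q \<le> D \<and> x * of_int q \<in> \<int>"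
  then obtain q p :: int where "0 < q" "q \<le> D" "x * of_int q = of_int p"
    by (auto elim: Ints_cases)
  then show "has_denom_le x D"
    unfolding has_denom_le_def by (intro exI[of _ p] exI[of _ q]) (simp add: field_simps)
qed

lemma has_denom_leI:
  assumes "x * of_int m \<in> \<int>" and "m \<noteq> 0" and "\<bar>m\<bar> \<le> D"
  shows "has_denom_le x D"
proof -
  have "x * of_int \<bar>m\<bar> \<in> \<int>"
    using assms(1) Ints_minus[OF assms(1)] by (cases "m \<ge> 0") simp_all
  then show ?thesis
    unfolding has_denom_le_iff_Ints using assms(2,3) by (intro exI[of _ "\<bar>m\<bar>"]) simp
qed

lemma has_denom_le_mono: "has_denom_le x D \<Longrightarrow> D \<le> D' \<Longrightarrow> has_denom_le x D'"
  unfolding has_denom_le_def by force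

lemma classes_eq: "classes r = (\<lambda>x. {u. r u = r x}) ` UNIV"
  unfolding classes_def by auto

lemma class_value_level: "class_value r {u. r u = r x} = r x"
  unfolding class_value_def using someI[of "\<lambda>u. r u = r x" x] by simp

lemma finite_denoms:
  "finite {snd (quotient_of (\<delta> v u)) | v u. v \<in> Vp \<and> u \<in> succs E v}"
  for E :: "('v::finite \<times> 'v) set"
proof (rule finite_subset)
  show "{snd (quotient_of (\<delta> v u)) | v u. v \<in> Vp \<and> u \<in> succs E v}
      \<subseteq> (\<lambda>(v, u). snd (quotient_of (\<delta> v u))) ` UNIV"
    by auto
qed simp

lemma max_denom_ge_1: "max_denom E Vp \<delta> \<ge> 1"
  unfolding max_denom_def using finite_denoms by (intro Max_ge) auto

lemma denom_le_max_denom: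
  "v \<in> Vp \<Longrightarrow> u \<in> succs E v \<Longrightarrow> snd (quotient_of (\<delta> v u)) \<le> max_denom E Vp \<delta>"
  unfolding max_denom_def using finite_denoms by (intro Max_ge) auto

locale harmonic_vector =
  fixes E :: "('v::finite \<times> 'v) set" and Vp :: "'v set" and \<delta> :: "'v \<Rightarrow> 'v \<Rightarrow> rat"
    and r :: "'v \<Rightarrow> real"
  assumes \<delta>_pos: "\<And>v u. v \<in> Vp \<Longrightarrow> u \<in> succs E v \<Longrightarrow> \<delta> v u > 0"
    and \<delta>_sum: "\<And>v. v \<in> Vp \<Longrightarrow> (\<Sum>u\<in>succs E v. \<delta> v u) = 1"
    and harmonic: "\<And>v. v \<in> Vp \<Longrightarrow> r v = (\<Sum>u\<in>succs E v. real_of_rat (\<delta> v u) * r u)"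
begin

lemma \<delta>_real_sum: "v \<in> Vp \<Longrightarrow> (\<Sum>u\<in>succs E v. real_of_rat (\<delta> v u)) = 1"
  using \<delta>_sum by (metis of_rat_1 of_rat_sum)

abbreviation level :: "'v \<Rightarrow> 'v set" where
  "level x \<equiv> {u. r u = r x}"

definition has_boundary :: "'v \<Rightarrow> bool" where
  "has_boundary x \<longleftrightarrow> (\<exists>b. boundary_vertex E Vp (level x) b)"

definition anchor :: "'v \<Rightarrow> 'v" where
  "anchor x = (SOME b. boundary_vertex E Vp (level x) b)"

lemma anchor:
  assumes "has_boundary x"
  shows "anchor x \<in> Vp" "r (anchor x) = r x" "\<exists>u\<in>succs E (anchor x). r u \<noteq> r x"
  using someI_ex[OF assms[unfolded has_boundary_def]]
  unfolding anchor_def boundary_vertex_def by auto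

lemma anchor_anchor: "has_boundary x \<Longrightarrow> anchor (anchor x) = anchor x"
  using anchor(2) unfolding anchor_def by simp

lemma has_boundary_anchor: "has_boundary x \<Longrightarrow> has_boundary (anchor x)"
  using anchor(2) unfolding has_boundary_def by simp

definition common_denom :: "'v \<Rightarrow> int" where
  "common_denom v = (\<Prod>u\<in>succs E v. snd (quotient_of (\<delta> v u)))"

lemma common_denom_pos: "common_denom v > 0"
  unfolding common_denom_def using quotient_of_denom_pos' by (simp add: prod_pos)

lemma \<delta>_mult_common_denom_Ints:
  assumes "u \<in> succs E v"
  shows "real_of_rat (\<delta> v u) * of_int (common_denom v) \<in> \<int>"
proof -
  obtain a b where q: "quotient_of (\<delta> v u) = (a, b)"
    by fastforce
  have "common_denom v = b * (\<Prod>w\<in>succs E v - {u}. snd (quotient_of (\<delta> v w)))"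
    unfolding common_denom_def using assms q by (simp add: prod.remove)
  then have "real_of_rat (\<delta> v u) * of_int (common_denom v)
      = of_int (a * (\<Prod>w\<in>succs E v - {u}. snd (quotient_of (\<delta> v w))))"
    using quotient_of_denom_pos[OF q] by (simp add: quotient_of_div[OF q] of_rat_divide field_simps)
  then show ?thesis
    by (metis Ints_of_int)
qed

lemma common_denom_le:
  assumes "v \<in> Vp"
  shows "common_denom v \<le> max_denom E Vp \<delta> ^ CARD('v)"
  unfolding common_denom_def
proof (rule prod_le_power)
  show "0 \<le> snd (quotient_of (\<delta> v u)) \<and> snd (quotient_of (\<delta> v u)) \<le> max_denom E Vp \<delta>"
    if "u \<in> succs E v" for u
    using quotient_of_denom_pos'[of "\<delta> v u"] denom_le_max_denom[OF assms that] by simp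
qed (simp_all add: card_mono max_denom_ge_1)

definition system_matrix :: "real^'v^'v" where
  "system_matrix = (\<chi> x y.
     if \<not> has_boundary x then of_bool (y = x)
     else if anchor x = x then
       of_int (common_denom x) * (of_bool (y = x) - (if y \<in> succs E x then real_of_rat (\<delta> x y) else 0))
     else of_bool (y = x) - of_bool (y = anchor x))"

definition system_rhs :: "real^'v" where
  "system_rhs = (\<chi> x. if has_boundary x then 0 else r x)"

lemma system_matrix_mult:
  "(system_matrix *v y) $ x =
     (if \<not> has_boundary x then y $ x
      else if anchor x = x then
        of_int (common_denom x) * (y $ x - (\<Sum>j\<in>succs E x. real_of_rat (\<delta> x j) * y $ j))
      else y $ x - y $ anchor x)"
proof -
  have "(system_matrix *v y) $ x = (\<Sum>j\<in>UNIV. system_matrix $ x $ j * y $ j)"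
    by (simp add: matrix_vector_mult_def)
  then show ?thesis
    by (auto simp: system_matrix_def left_diff_distrib sum_subtractf sum_of_bool_eq_mult
        sum_if_mem_mult mult.assoc simp flip: sum_distrib_left)
qed

lemma system_matrix_mult_values: "system_matrix *v (\<chi> x. r x) = system_rhs"
proof -
  have "(system_matrix *v (\<chi> x. r x)) $ x = system_rhs $ x" for x
    using anchor[of x] harmonic[of x] by (auto simp: system_matrix_mult system_rhs_def)
  then show ?thesis
    by (simp add: vec_eq_iff)
qed

lemma system_matrix_kernel_rows:
  assumes "system_matrix *v y = 0"
  shows "\<not> has_boundary x \<Longrightarrow> y $ x = 0"
    and "has_boundary x \<Longrightarrow> y $ anchor x = y $ x"
    and "has_boundary x \<Longrightarrow> y $ anchor x = (\<Sum>j\<in>succs E (anchor x). real_of_rat (\<delta> (anchor x) j) * y $ j)"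
proof -
  have row: "(system_matrix *v y) $ z = 0" for z
    using assms by simp
  show "\<not> has_boundary x \<Longrightarrow> y $ x = 0" and "has_boundary x \<Longrightarrow> y $ anchor x = y $ x"
    using row[of x] by (auto simp: system_matrix_mult split: if_splits)
  show "has_boundary x \<Longrightarrow> y $ anchor x = (\<Sum>j\<in>succs E (anchor x). real_of_rat (\<delta> (anchor x) j) * y $ j)"
    using row[of "anchor x"] common_denom_pos[of "anchor x"] anchor_anchor has_boundary_anchor
    by (simp add: system_matrix_mult)
qed

text \<open>
  Maximum principle: take a maximiser x0 of y of largest r-value among all maximisers.  The anchor
  b of its class also maximises y and y averages there, so all successors of b maximise y and have
  r-value at most r b; since r averages at b as well, they all lie in the class of b, which
  contradicts b being a boundary vertex.
\<close>

lemma system_matrix_kernel_nonpos: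
  assumes y: "system_matrix *v y = 0"
  shows "y $ x \<le> 0"
proof (rule ccontr)
  assume "\<not> y $ x \<le> 0"
  obtain x0 where y_le: "\<And>z. y $ z \<le> y $ x0" and r_le: "\<And>z. y $ z = y $ x0 \<Longrightarrow> r z \<le> r x0"
    using obtain_lex_maximiser[of "($) y" r] by blast
  have "has_boundary x0"
    using system_matrix_kernel_rows(1)[OF y, of x0] y_le[of x] \<open>\<not> y $ x \<le> 0\<close> by force
  define b where "b = anchor x0"
  have b: "b \<in> Vp" "r b = r x0" "\<exists>u\<in>succs E b. r u \<noteq> r b"
    using anchor[OF \<open>has_boundary x0\<close>] unfolding b_def by auto
  have "y $ j = y $ x0" if "j \<in> succs E b" for j
    using weighted_average_eq_bound_imp_eq[of "succs E b" "\<lambda>j. real_of_rat (\<delta> b j)"] that y_le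
      system_matrix_kernel_rows(2,3)[OF y \<open>has_boundary x0\<close>] \<delta>_pos[OF b(1)] \<delta>_real_sum[OF b(1)]
    unfolding b_def by simp
  then have "r j = r b" if "j \<in> succs E b" for j
    using weighted_average_eq_bound_imp_eq[of "succs E b" "\<lambda>j. real_of_rat (\<delta> b j)"] that r_le
      b(2) \<delta>_pos[OF b(1)] \<delta>_real_sum[OF b(1)] harmonic[OF b(1)] by simp
  then show False
    using b(3) by blast
qed

lemma system_matrix_kernel:
  assumes "system_matrix *v y = 0"
  shows "y = 0"
proof -
  have "system_matrix *v (- y) = - (system_matrix *v y)"
    by (simp add: vec_eq_iff matrix_vector_mult_def sum_negf)
  then show ?thesis
    using assms system_matrix_kernel_nonpos[of y] system_matrix_kernel_nonpos[of "- y"]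
    by (auto simp: vec_eq_iff intro: antisym)
qed

lemma det_system_matrix_nonzero: "det system_matrix \<noteq> 0"
  using system_matrix_kernel
  unfolding invertible_det_nz[symmetric] invertible_left_inverse matrix_left_invertible_ker
  by blast

lemma system_matrix_Ints: "system_matrix $ i $ j \<in> \<int>"
  using \<delta>_mult_common_denom_Ints[of j i]
  by (auto simp: system_matrix_def right_diff_distrib mult.commute)

lemma system_matrix_row_abs_sum_le:
  "(\<Sum>j\<in>UNIV. \<bar>system_matrix $ i $ j\<bar>) \<le> 2 * of_int (max_denom E Vp \<delta>) ^ CARD('v)"
proof -
  have "(1::real) \<le> of_int (max_denom E Vp \<delta>)"
    using max_denom_ge_1 by simp
  then have N: "(1::real) \<le> of_int (max_denom E Vp \<delta>) ^ CARD('v)"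
    by (rule one_le_power)
  consider "\<not> has_boundary i" | "has_boundary i" "anchor i = i" | "has_boundary i" "anchor i \<noteq> i"
    by blast
  then show ?thesis
  proof cases
    case 1
    then show ?thesis
      using N by (simp add: system_matrix_def sum_of_bool_eq_mult[where f="\<lambda>_. 1", simplified])
  next
    case 2
    have i: "i \<in> Vp"
      using anchor(1)[OF 2(1)] 2(2) by simp
    have "(\<Sum>j\<in>UNIV. \<bar>system_matrix $ i $ j\<bar>)
        \<le> (\<Sum>j\<in>UNIV. of_int (common_denom i) *
              (of_bool (j = i) + (if j \<in> succs E i then real_of_rat (\<delta> i j) else 0)))"
      using 2 common_denom_pos[of i] \<delta>_pos[OF i]
      by (intro sum_mono) (auto simp: system_matrix_def abs_mult abs_le_iff less_imp_le)
    also have "\<dots> = 2 * of_int (common_denom i)"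
      using \<delta>_real_sum[OF i]
      by (simp add: sum.distrib sum.If_cases flip: sum_distrib_left)
    also have "\<dots> \<le> 2 * of_int (max_denom E Vp \<delta>) ^ CARD('v)"
      using common_denom_le[OF i] by (simp flip: of_int_power)
    finally show ?thesis .
  next
    case 3
    have "(\<Sum>j\<in>UNIV. \<bar>system_matrix $ i $ j\<bar>) \<le> (\<Sum>j\<in>UNIV. of_bool (j = i) * 1 + of_bool (j = anchor i) * 1)"
      using 3 by (intro sum_mono) (auto simp: system_matrix_def)
    also have "\<dots> = 2"
      by (simp only: sum.distrib sum_of_bool_eq_mult)
    finally show ?thesis
      using N by simp
  qed
qed

lemma abs_det_system_matrix_le:
  "\<bar>det system_matrix\<bar> \<le> 2 ^ CARD('v) * of_int (max_denom E Vp \<delta>) ^ (CARD('v) * CARD('v))"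
proof -
  have "\<bar>det system_matrix\<bar> \<le> (\<Prod>i\<in>UNIV. \<Sum>j\<in>UNIV. \<bar>system_matrix $ i $ j\<bar>)"
    by (rule abs_det_le_prod_row_sums)
  also have "\<dots> \<le> (\<Prod>i\<in>(UNIV::'v set). 2 * of_int (max_denom E Vp \<delta>) ^ CARD('v))"
    by (intro prod_mono conjI sum_nonneg abs_ge_zero system_matrix_row_abs_sum_le)
  also have "\<dots> = 2 ^ CARD('v) * of_int (max_denom E Vp \<delta>) ^ (CARD('v) * CARD('v))"
    by (simp add: power_mult_distrib power_mult)
  finally show ?thesis .
qed

lemma obtain_system_rhs_denom:
  assumes "B0 > 0" and B0: "\<And>x. \<not> has_boundary x \<Longrightarrow> has_denom_le (r x) B0"
  obtains Q :: int where "0 < Q" and "Q \<le> B0 ^ CARD('v)" and "\<And>x. of_int Q * system_rhs $ x \<in> \<int>"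
proof -
  obtain q :: "'v \<Rightarrow> int" where q: "\<And>x. \<not> has_boundary x \<Longrightarrow> 0 < q x \<and> q x \<le> B0 \<and> r x * of_int (q x) \<in> \<int>"
    using B0 unfolding has_denom_le_iff_Ints by metis
  define Q where "Q = (\<Prod>x\<in>{x. \<not> has_boundary x}. q x)"
  have "of_int Q * system_rhs $ x \<in> \<int>" for x
  proof (cases "has_boundary x")
    case False
    then have "Q = q x * (\<Prod>y\<in>{x. \<not> has_boundary x} - {x}. q y)"
      unfolding Q_def by (simp add: prod.remove)
    then have "of_int Q * system_rhs $ x = r x * of_int (q x) * of_int (\<Prod>y\<in>{x. \<not> has_boundary x} - {x}. q y)"
      using False by (simp add: system_rhs_def del: of_int_prod)
    then show ?thesis
      using q[OF False] by (metis Ints_mult Ints_of_int)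
  qed (simp add: system_rhs_def)
  moreover have "0 < Q"
    unfolding Q_def using q by (intro prod_pos) auto
  moreover have "Q \<le> B0 ^ CARD('v)"
    unfolding Q_def using q \<open>B0 > 0\<close> by (intro prod_le_power) (auto simp: card_mono less_imp_le)
  ultimately show ?thesis
    using that by blast
qed

lemma obtain_det_system_matrix:
  obtains a :: int where "det system_matrix = of_int a" and "a \<noteq> 0"
    and "\<bar>a\<bar> \<le> 2 ^ CARD('v) * max_denom E Vp \<delta> ^ (CARD('v) * CARD('v))"
proof -
  obtain a where a: "det system_matrix = of_int a"
    using det_Ints[OF system_matrix_Ints] by (elim Ints_cases)
  moreover have "a \<noteq> 0"
    using det_system_matrix_nonzero a by simp
  moreover have "of_int \<bar>a\<bar> \<le> (of_int (2 ^ CARD('v) * max_denom E Vp \<delta> ^ (CARD('v) * CARD('v))) :: real)"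
    using abs_det_system_matrix_le a by simp
  ultimately show ?thesis
    using that of_int_le_iff by blast
qed

lemma has_denom_le_value:
  assumes "B0 > 0" and "\<And>x. \<not> has_boundary x \<Longrightarrow> has_denom_le (r x) B0"
  shows "has_denom_le (r k) (2 ^ CARD('v) * max_denom E Vp \<delta> ^ (CARD('v) * CARD('v)) * B0 ^ CARD('v))"
proof -
  obtain Q where "0 < Q" "Q \<le> B0 ^ CARD('v)" and Q: "\<And>x. of_int Q * system_rhs $ x \<in> \<int>"
    using obtain_system_rhs_denom[OF assms] by blast
  obtain a where a: "det system_matrix = of_int a" "a \<noteq> 0"
    and "\<bar>a\<bar> \<le> 2 ^ CARD('v) * max_denom E Vp \<delta> ^ (CARD('v) * CARD('v))"
    by (rule obtain_det_system_matrix)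
  have "(of_int Q *\<^sub>R (\<chi> x. r x)) $ k * det system_matrix \<in> \<int>"
    using system_matrix_Ints Q
    by (intro Cramer_mult_det_Ints) (simp_all add: matrix_vector_mult_scaleR system_matrix_mult_values)
  then have "r k * of_int (Q * a) \<in> \<int>"
    by (simp add: a mult_ac)
  then show ?thesis
    using \<open>0 < Q\<close> \<open>Q \<le> B0 ^ CARD('v)\<close> \<open>\<bar>a\<bar> \<le> _\<close> a(2)
    by (intro has_denom_leI[of _ "Q * a"]) (auto simp: abs_mult mult.commute intro: mult_mono)
qed

end

theorem theorem11:
  fixes E :: "('v::finite \<times> 'v) set" and V1 V2 Vp :: "'v set"
    and \<delta> :: "'v \<Rightarrow> 'v \<Rightarrow> rat" and w :: "'v \<times> 'v \<Rightarrow> rat"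
    and \<phi> :: "'v stream \<Rightarrow> real" and B0 :: int
  assumes game: "stochastic_game E V1 V2 Vp \<delta>"
    and meas: "\<phi> \<in> borel_measurable (stream_space (count_space UNIV))"
    and bdd: "bounded_objective E \<phi>"
    and pind: "prefix_independent E \<phi>"
    and B0_pos: "B0 > 0"
    and B0: "\<forall>C \<in> classes (game_value E V1 V2 \<delta> \<phi>).
               (\<forall>v. \<not> boundary_vertex E Vp C v) \<longrightarrow>
               (\<exists>p q :: int. 0 < q \<and> q \<le> B0 \<and>
                  class_value (game_value E V1 V2 \<delta> \<phi>) C = of_int p / of_int q)"
  shows "\<forall>C \<in> classes (game_value E V1 V2 \<delta> \<phi>).
           \<exists>p q :: int. 0 < q \<and>
             q \<le> 2 ^ CARD('v) * max_denom E Vp \<delta> ^ (CARD('v) ^ 3) * B0 ^ CARD('v) \<and>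
             class_value (game_value E V1 V2 \<delta> \<phi>) C = of_int p / of_int q"
proof -
  let ?n = "CARD('v)" and ?r = "game_value E V1 V2 \<delta> \<phi>"
  interpret stoch_game E V1 V2 Vp \<delta>
    using game by unfold_locales
  interpret harmonic_vector E Vp \<delta> ?r
    using game_value_average[OF _ meas bdd pind] \<delta>_pos \<delta>_sum by unfold_locales simp_all
  have "has_denom_le (?r x) B0" if "\<not> has_boundary x" for x
    using B0[rule_format, of "level x"] that class_value_level[of ?r x]
    unfolding classes_eq has_boundary_def has_denom_le_def by auto
  then have "has_denom_le (?r x) (2 ^ ?n * max_denom E Vp \<delta> ^ (?n * ?n) * B0 ^ ?n)" for x
    by (rule has_denom_le_value[OF B0_pos])
  moreover have "max_denom E Vp \<delta> ^ (?n * ?n) \<le> max_denom E Vp \<delta> ^ (?n ^ 3)"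
    using max_denom_ge_1 by (intro power_increasing) (simp_all add: power3_eq_cube)
  then have "2 ^ ?n * max_denom E Vp \<delta> ^ (?n * ?n) * B0 ^ ?n \<le> 2 ^ ?n * max_denom E Vp \<delta> ^ (?n ^ 3) * B0 ^ ?n"
    using B0_pos by (intro mult_right_mono mult_left_mono) simp_all
  ultimately have "has_denom_le (?r x) (2 ^ ?n * max_denom E Vp \<delta> ^ (?n ^ 3) * B0 ^ ?n)" for x
    using has_denom_le_mono by blast
  then show ?thesis
    unfolding classes_eq has_denom_le_def by (auto simp: class_value_level)
qed

end
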